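(* Let $\Omega\subset\mathbb{R}^N$ be a bounded domain with Lipschitz boundary, $s\in(0,1)$ and $p\in(1,+\infty)$. For every $\delta>0$ the spaces $\mathcal{X}_0^{\infty,s,p}(\Omega)$ and $\mathcal{X}_0^{\delta,s,p}(\Omega)$ are isomorphic (via restriction to $\Omega_\delta$ and extension by zero outside $\Omega_\delta$). In particular, for every $\delta>0$ there exists a constant $C(\delta)>1$ such that $$[v]_{W^{\delta,s,p}(\Omega_{\delta})}\leq[v]_{W^{s,p}(\mathbb{R}^N)}\leq C(\delta)\, [v]_{W^{\delta,s,p}(\Omega_{\delta})}$$ for every measurable $v:\mathbb{R}^N\to\mathbb{R}$ vanishing a.e. outside $\Omega$ (the quantities being finite or infinite simultaneously). Moreover, $C(\delta)\to 1$ as $\delta\to+\infty$.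
   Context: For $\delta>0$ let $\partial_\delta\Omega=\{y\in\mathbb{R}^N\setminus\Omega: |x-y|<\delta \text{ for some } x\in\Omega\}$ and $\Omega_\delta=\Omega\cup\partial_\delta\Omega$. Define $[u]_{W^{\delta,s,p}(\Omega_{\delta})}^p=\int_{\Omega_{\delta}}\int_{\Omega_{\delta}\cap B(x,\delta)}\frac{|u(x)-u(y)|^p}{|x-y|^{N+sp}}\,dy\,dx$ and $[u]_{W^{s,p}(\mathbb{R}^N)}^p=\int_{\mathbb{R}^N}\int_{\mathbb{R}^N}\frac{|u(x)-u(y)|^p}{|x-y|^{N+sp}}\,dy\,dx$. Let $\mathcal{X}_0^{\delta,s,p}(\Omega)=\{u\in L^p(\Omega_\delta): [u]_{W^{\delta,s,p}(\Omega_{\delta})}<+\infty,\ u=0 \text{ a.e. in } \partial_\delta\Omega\}$ and $\mathcal{X}_0^{\infty,s,p}(\Omega)=\{u:\mathbb{R}^N\to\mathbb{R}:\ u\in L^p(\Omega),\ [u]_{W^{s,p}(\mathbb{R}^N)}<+\infty,\ u=0 \text{ a.e. in } \mathbb{R}^N\setminus\Omega\}$, each normed by the corresponding seminorm. *)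

theory Defs
  imports "HOL-Analysis.Analysis"
begin

definition lipschitz_domain :: "'a::euclidean_space set \<Rightarrow> bool" where
  "lipschitz_domain \<Omega> \<longleftrightarrow> bounded \<Omega> \<and> open \<Omega> \<and> connected \<Omega> \<and> \<Omega> \<noteq> {} \<and>
     (\<forall>x0\<in>frontier \<Omega>. \<exists>r>0. \<exists>e::'a. norm e = 1 \<and>
        (\<exists>(g::'a \<Rightarrow> real) L. L-lipschitz_on UNIV g \<and>
           (\<forall>x\<in>ball x0 r. x \<in> \<Omega> \<longleftrightarrow> x \<bullet> e > g (x - (x \<bullet> e) *\<^sub>R e))))"

definition nl_collar :: "real \<Rightarrow> 'a::metric_space set \<Rightarrow> 'a set" where
  "nl_collar \<delta> \<Omega> = {y. y \<notin> \<Omega> \<and> (\<exists>x\<in>\<Omega>. dist x y < \<delta>)}"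

definition nl_ext :: "real \<Rightarrow> 'a::metric_space set \<Rightarrow> 'a set" where
  "nl_ext \<delta> \<Omega> = \<Omega> \<union> nl_collar \<delta> \<Omega>"

definition seminorm_delta_p :: "real \<Rightarrow> real \<Rightarrow> real \<Rightarrow> 'a::euclidean_space set \<Rightarrow> ('a \<Rightarrow> real) \<Rightarrow> ennreal" where
  "seminorm_delta_p \<delta> s p \<Omega> u =
     (\<integral>\<^sup>+ x\<in>nl_ext \<delta> \<Omega>. (\<integral>\<^sup>+ y\<in>nl_ext \<delta> \<Omega> \<inter> ball x \<delta>.
        ennreal (\<bar>u x - u y\<bar> powr p / dist x y powr (real DIM('a) + s * p)) \<partial>lebesgue) \<partial>lebesgue)"

definition seminorm_full_p :: "real \<Rightarrow> real \<Rightarrow> ('a::euclidean_space \<Rightarrow> real) \<Rightarrow> ennreal" where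
  "seminorm_full_p s p u =
     (\<integral>\<^sup>+ x. (\<integral>\<^sup>+ y.
        ennreal (\<bar>u x - u y\<bar> powr p / dist x y powr (real DIM('a) + s * p)) \<partial>lebesgue) \<partial>lebesgue)"

definition X0_delta :: "real \<Rightarrow> real \<Rightarrow> real \<Rightarrow> 'a::euclidean_space set \<Rightarrow> ('a \<Rightarrow> real) set" where
  "X0_delta \<delta> s p \<Omega> = {u. u \<in> borel_measurable lebesgue \<and>
      (\<integral>\<^sup>+ x\<in>nl_ext \<delta> \<Omega>. ennreal (\<bar>u x\<bar> powr p) \<partial>lebesgue) < \<infinity> \<and>
      seminorm_delta_p \<delta> s p \<Omega> u < \<infinity> \<and>
      (AE x in lebesgue. x \<in> nl_collar \<delta> \<Omega> \<longrightarrow> u x = 0)}"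

definition X0_infty :: "real \<Rightarrow> real \<Rightarrow> 'a::euclidean_space set \<Rightarrow> ('a \<Rightarrow> real) set" where
  "X0_infty s p \<Omega> = {u. u \<in> borel_measurable lebesgue \<and>
      (\<integral>\<^sup>+ x\<in>\<Omega>. ennreal (\<bar>u x\<bar> powr p) \<partial>lebesgue) < \<infinity> \<and>
      seminorm_full_p s p u < \<infinity> \<and>
      (AE x in lebesgue. x \<notin> \<Omega> \<longrightarrow> u x = 0)}"

definition zero_ext :: "real \<Rightarrow> 'a::metric_space set \<Rightarrow> ('a \<Rightarrow> real) \<Rightarrow> 'a \<Rightarrow> real" where
  "zero_ext \<delta> \<Omega> u = (\<lambda>x. if x \<in> nl_ext \<delta> \<Omega> then u x else 0)"

end

theory Submission
  imports Defs
begin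

(*
  Since v vanishes outside \<Omega>, the pairs missing from the truncated seminorm are those at
  distance at least \<delta>. There |v x - v y|^p \<le> 2^p (|v x|^p + |v y|^p), so their contribution
  is at most 2^(p+1) \<integral>\<^sub>\<Omega> |v|^p times the tail integral of |z|^-(N+sp) over |z| \<ge> \<delta>,
  which is O(\<delta>^-(sp)) (sum over dyadic annuli). It remains to bound \<integral>\<^sub>\<Omega> |v|^p by the
  truncated seminorm, a nonlocal Poincare inequality. If \<delta> \<ge> 2D, where D bounds the distances
  in \<Omega>, every x \<in> \<Omega> interacts with the whole annulus D \<le> |y - x| < 2D, on which v = 0;
  this gives a constant independent of \<delta>, so the tail factor drives C(\<delta>) to 1. For small \<delta>,
  averaging over a ball of radius \<delta>/4 at distance \<delta>/2 in a fixed direction e bounds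
  \<integral> |v|^p over a half-space {x \<bullet> e > t - \<delta>/4} by the truncated seminorm plus the same
  integral over {x \<bullet> e > t}; finitely many steps reach a half-space disjoint from \<Omega>.
*)

lemma sigma_finite_measure_lebesgue: "sigma_finite_measure (lebesgue :: 'a::euclidean_space measure)"
proof
  from lborel.sigma_finite_countable obtain A :: "'a set set" where
    "countable A" "A \<subseteq> sets lborel" "\<Union>A = space lborel" "\<forall>a\<in>A. emeasure lborel a \<noteq> \<infinity>"
    by blast
  then show "\<exists>A::'a set set. countable A \<and> A \<subseteq> sets lebesgue \<and> \<Union>A = space lebesgue \<and>
      (\<forall>a\<in>A. emeasure lebesgue a \<noteq> \<infinity>)"
    by (intro exI[of _ A]) auto
qed

interpretation lebesgue_pair: pair_sigma_finite "lebesgue :: 'a::euclidean_space measure" "lebesgue :: 'a measure"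
  by (intro pair_sigma_finite.intro sigma_finite_measure_lebesgue)

lemma measurable_ident_lebesgue [measurable]:
  "(\<lambda>x. x) \<in> borel_measurable (lebesgue :: 'a::euclidean_space measure)"
  by (rule measurable_completion) simp

lemma measurable_fst_lebesgue [measurable]:
  "fst \<in> borel_measurable ((lebesgue :: 'a::euclidean_space measure) \<Otimes>\<^sub>M (lebesgue :: 'b::euclidean_space measure))"
  using measurable_compose[OF measurable_fst measurable_ident_lebesgue] by simp

lemma measurable_snd_lebesgue [measurable]:
  "snd \<in> borel_measurable ((lebesgue :: 'a::euclidean_space measure) \<Otimes>\<^sub>M (lebesgue :: 'b::euclidean_space measure))"
  using measurable_compose[OF measurable_snd measurable_ident_lebesgue] by simp

lemma emeasure_lebesgue_ball:
  "r \<ge> 0 \<Longrightarrow> emeasure lebesgue (ball (c::'a::euclidean_space) r) = ennreal (unit_ball_vol DIM('a) * r ^ DIM('a))"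
  by (simp add: emeasure_ball)

lemma ennreal_mult_le_imp_le_div:
  assumes "c > 0" "ennreal c * a \<le> b"
  shows "a \<le> ennreal (1 / c) * b"
proof -
  have "a = ennreal (1 / c) * (ennreal c * a)"
    using assms(1) by (simp add: mult.assoc[symmetric] ennreal_mult[symmetric])
  also have "\<dots> \<le> ennreal (1 / c) * b"
    using assms(2) by (rule mult_left_mono) simp
  finally show ?thesis .
qed

lemma ennreal_le_div_add_of_mult_le:
  assumes le: "ennreal c * a \<le> ennreal A * b + M * (ennreal c * d)" and c: "c > 0" and A: "A \<ge> 0"
  shows "a \<le> ennreal (A / c) * b + M * d"
proof -
  have "a \<le> ennreal (1 / c) * (ennreal A * b + M * (ennreal c * d))"
    using ennreal_mult_le_imp_le_div[OF c le] .
  also have "\<dots> = ennreal (A / c) * b + M * ((ennreal (1 / c) * ennreal c) * d)"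
    using c A by (simp add: distrib_left ac_simps flip: ennreal_mult)
  also have "ennreal (1 / c) * ennreal c = 1"
    using c by (simp flip: ennreal_mult)
  finally show ?thesis
    by simp
qed

lemma powr_abs_add_le:
  fixes a b p :: real
  assumes "p > 0"
  shows "\<bar>a + b\<bar> powr p \<le> 2 powr p * (\<bar>a\<bar> powr p + \<bar>b\<bar> powr p)"
proof -
  have "\<bar>a + b\<bar> powr p \<le> (2 * max \<bar>a\<bar> \<bar>b\<bar>) powr p"
    by (rule powr_mono2) (use assms in auto)
  also have "\<dots> = 2 powr p * max \<bar>a\<bar> \<bar>b\<bar> powr p"
    by (simp add: powr_mult)
  also have "max \<bar>a\<bar> \<bar>b\<bar> powr p \<le> \<bar>a\<bar> powr p + \<bar>b\<bar> powr p"
    by (cases "\<bar>a\<bar> \<le> \<bar>b\<bar>") (auto simp: max_def)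
  finally show ?thesis by simp
qed

section \<open>Tail integral of the kernel\<close>

lemma disjoint_family_dyadic_annuli:
  fixes x :: "'a::metric_space"
  assumes "r > 0"
  shows "disjoint_family (\<lambda>k::nat. {y. r * 2^k \<le> dist x y \<and> dist x y < r * 2^Suc k})"
proof -
  have "r * 2^Suc m \<le> r * 2^n" if "m < n" for m n :: nat
    using assms that by (intro mult_left_mono power_increasing) auto
  then have "{y. r * 2^m \<le> dist x y \<and> dist x y < r * 2^Suc m} \<inter> {y. r * 2^n \<le> dist x y \<and> dist x y < r * 2^Suc n} = {}"
    if "m \<noteq> n" for m n :: nat
    using that by (cases m n rule: linorder_cases) force+
  then show ?thesis
    unfolding disjoint_family_on_def by blast
qed

lemma UN_dyadic_annuli:
  fixes x :: "'a::metric_space"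
  assumes "r > 0"
  shows "(\<Union>k::nat. {y. r * 2^k \<le> dist x y \<and> dist x y < r * 2^Suc k}) = {y. r \<le> dist x y}"
proof (intro equalityI subsetI)
  fix y assume "y \<in> {y. r \<le> dist x y}"
  then have "\<not> dist x y < r * 2^0" by simp
  moreover obtain n where "dist x y / r < 2^n"
    using real_arch_pow[of 2 "dist x y / r"] by auto
  then have "\<exists>n. dist x y < r * 2^n"
    using assms by (auto simp: field_simps)
  ultimately obtain k where "\<not> dist x y < r * 2^k" "dist x y < r * 2^Suc k"
    using exists_least_lemma[of "\<lambda>n. dist x y < r * 2^n"] by blast
  then show "y \<in> (\<Union>k. {y. r * 2^k \<le> dist x y \<and> dist x y < r * 2^Suc k})"
    by (intro UN_I[of k]) (auto simp: not_less)
next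
  fix y assume "y \<in> (\<Union>k. {y. r * 2^k \<le> dist x y \<and> dist x y < r * 2^Suc k})"
  then obtain k where "r * 2^k \<le> dist x y" by auto
  moreover have "r \<le> r * 2^k" using assms by simp
  ultimately show "y \<in> {y. r \<le> dist x y}" by simp
qed

lemma nn_integral_dyadic_annulus_le:
  fixes x :: "'a::euclidean_space"
  assumes r: "r > 0" and q: "q > 0"
  shows "(\<integral>\<^sup>+y. indicator {y. r * 2^k \<le> dist x y \<and> dist x y < r * 2^Suc k} y *
            ennreal (1 / dist x y powr (real DIM('a) + q)) \<partial>lebesgue)
         \<le> ennreal (unit_ball_vol DIM('a) * 2^DIM('a) * r powr (-q) * (2 powr (-q))^k)"
proof -
  let ?N = "DIM('a)" and ?A = "{y. r * 2^k \<le> dist x y \<and> dist x y < r * 2^Suc k}"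
  define \<rho> where "\<rho> = r * 2^k"
  have \<rho>: "\<rho> > 0" using r by (simp add: \<rho>_def)
  have kernel: "1 / dist x y powr (real ?N + q) \<le> \<rho> powr (-(real ?N + q))" if "y \<in> ?A" for y
  proof -
    have "dist x y powr (-(real ?N + q)) \<le> \<rho> powr (-(real ?N + q))"
      by (rule powr_mono2') (use that \<rho> q in \<open>auto simp: \<rho>_def\<close>)
    then show ?thesis by (simp only: powr_minus_divide)
  qed
  have "(\<integral>\<^sup>+y. indicator ?A y * ennreal (1 / dist x y powr (real ?N + q)) \<partial>lebesgue)
      \<le> (\<integral>\<^sup>+y. ennreal (\<rho> powr (-(real ?N + q))) * indicator ?A y \<partial>lebesgue)"
    by (intro nn_integral_mono) (auto simp: indicator_def simp del: minus_add_distrib intro!: ennreal_leI kernel)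
  also have "\<dots> = ennreal (\<rho> powr (-(real ?N + q))) * emeasure lebesgue ?A"
    by (rule nn_integral_cmult_indicator) (rule sets_completionI_sets, measurable)
  also have "\<dots> \<le> ennreal (\<rho> powr (-(real ?N + q))) * emeasure lebesgue (ball x (2 * \<rho>))"
    by (intro mult_left_mono emeasure_mono) (auto simp: \<rho>_def)
  also have "\<dots> = ennreal (\<rho> powr (-(real ?N + q)) * (unit_ball_vol ?N * (2 * \<rho>)^?N))"
    using \<rho> by (subst emeasure_lebesgue_ball) (auto simp: ennreal_mult)
  also have "\<rho> powr (-(real ?N + q)) * (unit_ball_vol ?N * (2 * \<rho>)^?N)
      = unit_ball_vol ?N * 2^?N * (\<rho> powr (-(real ?N + q)) * \<rho>^?N)"
    by (simp add: power_mult_distrib mult_ac)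
  also have "\<rho> powr (-(real ?N + q)) * \<rho>^?N = \<rho> powr (-q)"
    using \<rho> by (simp add: powr_realpow[symmetric] powr_add[symmetric])
  also have "\<rho> powr (-q) = r powr (-q) * (2 powr (-q))^k"
    using r by (simp add: \<rho>_def powr_mult powr_realpow[symmetric] powr_powr powr_power mult.commute)
  finally show ?thesis by (simp add: mult.assoc)
qed

definition tail_const :: "nat \<Rightarrow> real \<Rightarrow> real \<Rightarrow> real" where
  "tail_const n q r = unit_ball_vol n * 2^n * r powr (-q) / (1 - 2 powr (-q))"

lemma tail_const_nonneg: "q > 0 \<Longrightarrow> tail_const n q r \<ge> 0"
  unfolding tail_const_def using powr_less_one[of 2 "-q"] by (intro divide_nonneg_nonneg) auto

lemma tail_const_tendsto_0: "q > 0 \<Longrightarrow> (tail_const n q \<longlongrightarrow> 0) at_top"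
  unfolding tail_const_def[abs_def]
  by (rule tendsto_eq_intros tendsto_neg_powr filterlim_ident | simp)+

definition tail_kernel :: "real \<Rightarrow> real \<Rightarrow> 'a::metric_space \<Rightarrow> 'a \<Rightarrow> ennreal" where
  "tail_kernel r a x y = indicator {y. r \<le> dist x y} y * ennreal (1 / dist x y powr a)"

lemma tail_kernel_commute: "tail_kernel r a x y = tail_kernel r a y x"
  by (simp add: tail_kernel_def dist_commute indicator_def)

lemma measurable_tail_kernel [measurable]:
  "(\<lambda>(x, y). tail_kernel r a x y) \<in> borel_measurable ((lebesgue :: 'a::euclidean_space measure) \<Otimes>\<^sub>M lebesgue)"
  unfolding tail_kernel_def by measurable

lemma nn_integral_tail_kernel_le:
  fixes x :: "'a::euclidean_space"
  assumes r: "r > 0" and q: "q > 0"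
  shows "(\<integral>\<^sup>+y. tail_kernel r (real DIM('a) + q) x y \<partial>lebesgue) \<le> ennreal (tail_const DIM('a) q r)"
proof -
  let ?A = "\<lambda>k::nat. {y. r * 2^k \<le> dist x y \<and> dist x y < r * 2^Suc k}"
  let ?g = "\<lambda>y. ennreal (1 / dist x y powr (real DIM('a) + q))"
  define c where "c = unit_ball_vol DIM('a) * 2^DIM('a) * r powr (-q)"
  define t where "t = (2::real) powr (-q)"
  have t: "0 \<le> t" "t < 1" using q by (auto simp: t_def intro!: powr_less_one)
  have "indicator {y. r \<le> dist x y} y = (\<Sum>k. indicator (?A k) y :: ennreal)" for y
    using suminf_indicator[OF disjoint_family_dyadic_annuli[OF r, of x]] UN_dyadic_annuli[OF r, of x]
    by simp
  then have "(\<integral>\<^sup>+y. tail_kernel r (real DIM('a) + q) x y \<partial>lebesgue)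
      = (\<integral>\<^sup>+y. (\<Sum>k. indicator (?A k) y * ?g y) \<partial>lebesgue)"
    by (simp add: tail_kernel_def ennreal_suminf_multc)
  also have "\<dots> = (\<Sum>k. \<integral>\<^sup>+y. indicator (?A k) y * ?g y \<partial>lebesgue)"
    by (rule nn_integral_suminf) measurable
  also have "\<dots> \<le> (\<Sum>k. ennreal (c * t^k))"
    using nn_integral_dyadic_annulus_le[OF r q] by (intro suminf_le) (auto simp: c_def t_def)
  also have "\<dots> = ennreal (c / (1 - t))"
  proof (rule suminf_ennreal_eq)
    show "0 \<le> c * t^k" for k using t by (simp add: c_def)
    show "(\<lambda>k. c * t^k) sums (c / (1 - t))"
      using sums_mult[OF geometric_sums[of t], of c] t by (simp add: field_simps)
  qed
  finally show ?thesis by (simp add: tail_const_def c_def t_def)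
qed

section \<open>The truncated seminorm\<close>

lemma nl_ext_eq_UN_ball: "\<delta> > 0 \<Longrightarrow> nl_ext \<delta> \<Omega> = (\<Union>x\<in>\<Omega>. ball x \<delta>)"
  unfolding nl_ext_def nl_collar_def by (auto simp: mem_ball)

lemma open_nl_ext: "\<delta> > 0 \<Longrightarrow> open (nl_ext \<delta> \<Omega>)"
  by (simp add: nl_ext_eq_UN_ball open_UN)

lemma sets_lebesgue_nl_ext [measurable]:
  assumes "\<delta> > 0"
  shows "nl_ext \<delta> (\<Omega> :: 'a::euclidean_space set) \<in> sets lebesgue"
  using open_nl_ext[OF assms, of \<Omega>] by simp

lemma nl_ext_memI: "x \<in> \<Omega> \<Longrightarrow> dist x y < \<delta> \<Longrightarrow> y \<in> nl_ext \<delta> \<Omega>"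
  unfolding nl_ext_def nl_collar_def by auto

lemma subset_nl_ext: "\<Omega> \<subseteq> nl_ext \<delta> \<Omega>"
  by (auto simp: nl_ext_def)

definition delta_integrand :: "real \<Rightarrow> real \<Rightarrow> real \<Rightarrow> 'a::euclidean_space set \<Rightarrow> ('a \<Rightarrow> real) \<Rightarrow> 'a \<Rightarrow> 'a \<Rightarrow> ennreal"
  where "delta_integrand \<delta> s p \<Omega> v x y =
    (if x \<in> nl_ext \<delta> \<Omega> \<and> y \<in> nl_ext \<delta> \<Omega> \<and> dist x y < \<delta>
     then ennreal (\<bar>v x - v y\<bar> powr p / dist x y powr (real DIM('a) + s * p)) else 0)"

lemma measurable_delta_integrand [measurable]:
  assumes "v \<in> borel_measurable lebesgue" "\<delta> > 0"
  shows "(\<lambda>(x, y). delta_integrand \<delta> s p \<Omega> v x y) \<in> borel_measurable (lebesgue \<Otimes>\<^sub>M lebesgue)"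
  using assms unfolding delta_integrand_def by measurable

lemma seminorm_delta_p_eq_integrand:
  "seminorm_delta_p \<delta> s p \<Omega> v = (\<integral>\<^sup>+x. (\<integral>\<^sup>+y. delta_integrand \<delta> s p \<Omega> v x y \<partial>lebesgue) \<partial>lebesgue)"
  unfolding seminorm_delta_p_def delta_integrand_def
  by (intro nn_integral_cong) (auto simp: nn_integral_multc indicator_def mem_ball intro!: nn_integral_cong)

lemma seminorm_delta_p_le_full_p: "seminorm_delta_p \<delta> s p \<Omega> v \<le> seminorm_full_p s p v"
  unfolding seminorm_delta_p_eq_integrand seminorm_full_p_def delta_integrand_def
  by (intro nn_integral_mono) auto

lemma seminorm_delta_p_cong:
  "(\<And>x. x \<in> nl_ext \<delta> \<Omega> \<Longrightarrow> u x = w x) \<Longrightarrow> seminorm_delta_p \<delta> s p \<Omega> u = seminorm_delta_p \<delta> s p \<Omega> w"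
  unfolding seminorm_delta_p_eq_integrand delta_integrand_def by (intro nn_integral_cong) auto

lemma nonlocal_integrand_split:
  fixes v :: "'a::euclidean_space \<Rightarrow> real" and s p :: real
  assumes vx: "x \<notin> \<Omega> \<longrightarrow> v x = 0" and vy: "y \<notin> \<Omega> \<longrightarrow> v y = 0" and p: "p > 0"
  defines "\<alpha> \<equiv> real DIM('a) + s * p"
  shows "ennreal (\<bar>v x - v y\<bar> powr p / dist x y powr \<alpha>)
    \<le> delta_integrand \<delta> s p \<Omega> v x y + ennreal (2 powr p) * (ennreal (\<bar>v x\<bar> powr p) * tail_kernel \<delta> \<alpha> x y)
      + ennreal (2 powr p) * (ennreal (\<bar>v y\<bar> powr p) * tail_kernel \<delta> \<alpha> x y)"
proof (cases "dist x y < \<delta>")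
  case True
  have "x \<in> nl_ext \<delta> \<Omega> \<and> y \<in> nl_ext \<delta> \<Omega> \<or> v x = 0 \<and> v y = 0"
    using True vx vy nl_ext_memI[of x \<Omega> y \<delta>] nl_ext_memI[of y \<Omega> x \<delta>]
    by (auto simp: nl_ext_def dist_commute)
  then show ?thesis
    using True p by (auto simp: delta_integrand_def \<alpha>_def)
next
  case False
  have "\<bar>v x - v y\<bar> powr p \<le> 2 powr p * \<bar>v x\<bar> powr p + 2 powr p * \<bar>v y\<bar> powr p"
    using powr_abs_add_le[OF p, of "v x" "- v y"] by (simp add: distrib_left)
  then have "\<bar>v x - v y\<bar> powr p / dist x y powr \<alpha>
      \<le> 2 powr p * (\<bar>v x\<bar> powr p * (1 / dist x y powr \<alpha>)) + 2 powr p * (\<bar>v y\<bar> powr p * (1 / dist x y powr \<alpha>))"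
    by (simp add: divide_right_mono flip: add_divide_distrib)
  then have "ennreal (\<bar>v x - v y\<bar> powr p / dist x y powr \<alpha>)
      \<le> ennreal (2 powr p) * (ennreal (\<bar>v x\<bar> powr p) * ennreal (1 / dist x y powr \<alpha>))
        + ennreal (2 powr p) * (ennreal (\<bar>v y\<bar> powr p) * ennreal (1 / dist x y powr \<alpha>))"
    by (simp add: ennreal_mult[symmetric] ennreal_plus[symmetric] ennreal_leI del: ennreal_plus)
  then show ?thesis
    using False by (simp add: delta_integrand_def tail_kernel_def)
qed

lemma seminorm_full_p_le:
  fixes v :: "'a::euclidean_space \<Rightarrow> real"
  assumes [measurable]: "v \<in> borel_measurable lebesgue"
    and v0: "AE x in lebesgue. x \<notin> \<Omega> \<longrightarrow> v x = 0"
    and \<delta>: "\<delta> > 0" and p: "p > 0" and sp: "s * p > 0"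
  shows "seminorm_full_p s p v \<le> seminorm_delta_p \<delta> s p \<Omega> v
           + ennreal (2 * 2 powr p * tail_const DIM('a) (s * p) \<delta>) * (\<integral>\<^sup>+x\<in>\<Omega>. ennreal (\<bar>v x\<bar> powr p) \<partial>lebesgue)"
proof -
  define \<alpha> where "\<alpha> = real DIM('a) + s * p"
  define M where "M = ennreal (2 powr p)"
  define u where "u x = ennreal (\<bar>v x\<bar> powr p)" for x
  define K where "K = (tail_kernel \<delta> \<alpha> :: 'a \<Rightarrow> 'a \<Rightarrow> ennreal)"
  have [measurable]: "u \<in> borel_measurable lebesgue" "(\<lambda>(x, y). K x y) \<in> borel_measurable (lebesgue \<Otimes>\<^sub>M lebesgue)"
    unfolding u_def K_def by measurable
  have "AE x in lebesgue. (\<integral>\<^sup>+y. ennreal (\<bar>v x - v y\<bar> powr p / dist x y powr \<alpha>) \<partial>lebesgue)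
      \<le> (\<integral>\<^sup>+y. delta_integrand \<delta> s p \<Omega> v x y + M * (u x * K x y) + M * (u y * K x y) \<partial>lebesgue)"
    using v0
  proof eventually_elim
    case (elim x)
    show ?case
      using v0 unfolding M_def u_def K_def \<alpha>_def
      by (intro nn_integral_mono_AE) (auto elim!: eventually_mono intro!: nonlocal_integrand_split elim p)
  qed
  then have "seminorm_full_p s p v
      \<le> (\<integral>\<^sup>+x. (\<integral>\<^sup>+y. delta_integrand \<delta> s p \<Omega> v x y + M * (u x * K x y) + M * (u y * K x y) \<partial>lebesgue) \<partial>lebesgue)"
    unfolding seminorm_full_p_def \<alpha>_def[symmetric] by (rule nn_integral_mono_AE)
  also have "\<dots> = seminorm_delta_p \<delta> s p \<Omega> v + 2 * M * (\<integral>\<^sup>+x. u x * (\<integral>\<^sup>+y. K x y \<partial>lebesgue) \<partial>lebesgue)"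
  proof -
    have "(\<integral>\<^sup>+x. (\<integral>\<^sup>+y. u y * K x y \<partial>lebesgue) \<partial>lebesgue) = (\<integral>\<^sup>+y. (\<integral>\<^sup>+x. u y * K x y \<partial>lebesgue) \<partial>lebesgue)"
      by (rule lebesgue_pair.Fubini'[symmetric]) measurable
    also have "\<dots> = (\<integral>\<^sup>+x. u x * (\<integral>\<^sup>+y. K x y \<partial>lebesgue) \<partial>lebesgue)"
      by (simp add: K_def tail_kernel_commute nn_integral_cmult)
    finally show ?thesis
      using \<delta> by (simp add: nn_integral_add nn_integral_cmult seminorm_delta_p_eq_integrand mult_2 distrib_right)
  qed
  also have "\<dots> \<le> seminorm_delta_p \<delta> s p \<Omega> v + 2 * M * (\<integral>\<^sup>+x. u x * ennreal (tail_const DIM('a) (s * p) \<delta>) \<partial>lebesgue)"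
    unfolding K_def \<alpha>_def
    by (intro add_left_mono mult_left_mono nn_integral_mono nn_integral_tail_kernel_le \<delta> sp) simp_all
  also have "(\<integral>\<^sup>+x. u x * ennreal (tail_const DIM('a) (s * p) \<delta>) \<partial>lebesgue)
      = ennreal (tail_const DIM('a) (s * p) \<delta>) * (\<integral>\<^sup>+x\<in>\<Omega>. ennreal (\<bar>v x\<bar> powr p) \<partial>lebesgue)"
  proof -
    have "(\<integral>\<^sup>+x. u x \<partial>lebesgue) = (\<integral>\<^sup>+x\<in>\<Omega>. ennreal (\<bar>v x\<bar> powr p) \<partial>lebesgue)"
      using v0 p by (intro nn_integral_cong_AE) (auto simp: u_def indicator_def elim!: eventually_mono)
    then show ?thesis
      by (simp add: nn_integral_multc mult.commute)
  qed
  finally show ?thesis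
    using tail_const_nonneg[OF sp] by (simp add: M_def ennreal_mult mult.assoc)
qed

section \<open>Nonlocal Poincare inequality\<close>

definition annulus_const :: "nat \<Rightarrow> real \<Rightarrow> real \<Rightarrow> real" where
  "annulus_const n a D = (2 * D) powr (-a) * (unit_ball_vol n * ((2 * D)^n - D^n))"

lemma annulus_const_pos:
  assumes "D > 0" "n > 0"
  shows "annulus_const n a D > 0"
proof -
  have "D^n < (2 * D)^n"
    using assms by (intro power_strict_mono) auto
  then show ?thesis
    using assms by (simp add: annulus_const_def)
qed

lemma emeasure_lebesgue_annulus:
  fixes x :: "'a::euclidean_space"
  assumes "D \<ge> 0"
  shows "emeasure lebesgue (ball x (2 * D) - ball x D) = ennreal (unit_ball_vol DIM('a) * ((2 * D)^DIM('a) - D^DIM('a)))"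
proof -
  have "emeasure lebesgue (ball x (2 * D) - ball x D) = emeasure lebesgue (ball x (2 * D)) - emeasure lebesgue (ball x D)"
    using assms emeasure_lebesgue_ball[OF assms, of x] by (intro emeasure_Diff) auto
  also have "\<dots> = ennreal (unit_ball_vol DIM('a) * ((2 * D)^DIM('a) - D^DIM('a)))"
    using assms by (simp add: emeasure_ball ennreal_minus right_diff_distrib power_mono)
  finally show ?thesis .
qed

lemma nn_integral_delta_integrand_ge_annulus:
  fixes v :: "'a::euclidean_space \<Rightarrow> real"
  assumes v0: "AE y in lebesgue. y \<notin> \<Omega> \<longrightarrow> v y = 0" and x: "x \<in> \<Omega>"
    and sp: "s * p > 0" and D: "D > 0" and diam: "\<forall>x\<in>\<Omega>. \<forall>y\<in>\<Omega>. dist x y < D" and \<delta>: "2 * D \<le> \<delta>"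
  shows "ennreal (annulus_const DIM('a) (real DIM('a) + s * p) D * \<bar>v x\<bar> powr p)
     \<le> (\<integral>\<^sup>+y. delta_integrand \<delta> s p \<Omega> v x y \<partial>lebesgue)"
proof -
  define \<alpha> where "\<alpha> = real DIM('a) + s * p"
  define c where "c = \<bar>v x\<bar> powr p * (2 * D) powr (-\<alpha>)"
  let ?A = "ball x (2 * D) - ball x D"
  have "D ^ DIM('a) \<le> (2 * D) ^ DIM('a)"
    using D by (intro power_mono) auto
  then have "ennreal (annulus_const DIM('a) \<alpha> D * \<bar>v x\<bar> powr p)
      = ennreal c * ennreal (unit_ball_vol DIM('a) * ((2 * D)^DIM('a) - D^DIM('a)))"
    by (simp add: c_def annulus_const_def ennreal_mult[symmetric] mult_ac)
  also have "\<dots> = ennreal c * emeasure lebesgue ?A"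
    using D by (subst emeasure_lebesgue_annulus) auto
  also have "\<dots> = (\<integral>\<^sup>+y. ennreal c * indicator ?A y \<partial>lebesgue)"
    by (rule nn_integral_cmult_indicator[symmetric]) simp
  also have "\<dots> \<le> (\<integral>\<^sup>+y. delta_integrand \<delta> s p \<Omega> v x y \<partial>lebesgue)"
    using v0
  proof (intro nn_integral_mono_AE, eventually_elim)
    case (elim y)
    show ?case
    proof (cases "y \<in> ?A")
      case True
      then have d: "D \<le> dist x y" "dist x y < 2 * D" by auto
      then have "v y = 0"
        using x diam elim by force
      moreover have "(2 * D) powr (-\<alpha>) \<le> 1 / dist x y powr \<alpha>"
        unfolding powr_minus_divide using d D sp
        by (intro divide_left_mono powr_mono2) (auto simp: \<alpha>_def intro!: mult_pos_pos)
      then have "c \<le> \<bar>v x\<bar> powr p / dist x y powr \<alpha>"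
        unfolding c_def using mult_left_mono[of _ _ "\<bar>v x\<bar> powr p"] by fastforce
      moreover have "x \<in> nl_ext \<delta> \<Omega>" "y \<in> nl_ext \<delta> \<Omega>"
        using x d \<delta> nl_ext_memI[of x \<Omega> y \<delta>] by (auto simp: nl_ext_def)
      ultimately show ?thesis
        using True d \<delta> by (auto simp: delta_integrand_def \<alpha>_def intro!: ennreal_leI)
    qed simp
  qed
  finally show ?thesis
    by (simp add: \<alpha>_def)
qed

lemma nonlocal_poincare_large:
  fixes v :: "'a::euclidean_space \<Rightarrow> real"
  assumes [measurable]: "v \<in> borel_measurable lebesgue" "\<Omega> \<in> sets lebesgue"
    and v0: "AE x in lebesgue. x \<notin> \<Omega> \<longrightarrow> v x = 0"
    and sp: "s * p > 0" and D: "D > 0"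
    and diam: "\<forall>x\<in>\<Omega>. \<forall>y\<in>\<Omega>. dist x y < D" and \<delta>: "2 * D \<le> \<delta>"
  shows "(\<integral>\<^sup>+x\<in>\<Omega>. ennreal (\<bar>v x\<bar> powr p) \<partial>lebesgue)
     \<le> ennreal (1 / annulus_const DIM('a) (real DIM('a) + s * p) D) * seminorm_delta_p \<delta> s p \<Omega> v"
proof (rule ennreal_mult_le_imp_le_div)
  define m where "m = annulus_const DIM('a) (real DIM('a) + s * p) D"
  show m: "m > 0"
    unfolding m_def using D by (intro annulus_const_pos) auto
  have "ennreal m * (\<integral>\<^sup>+x\<in>\<Omega>. ennreal (\<bar>v x\<bar> powr p) \<partial>lebesgue)
      = (\<integral>\<^sup>+x. ennreal (m * \<bar>v x\<bar> powr p) * indicator \<Omega> x \<partial>lebesgue)"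
    using m by (simp add: nn_integral_cmult[symmetric] ennreal_mult mult_ac)
  also have "\<dots> \<le> (\<integral>\<^sup>+x. (\<integral>\<^sup>+y. delta_integrand \<delta> s p \<Omega> v x y \<partial>lebesgue) \<partial>lebesgue)"
    unfolding m_def
    by (intro nn_integral_mono) (auto simp: indicator_def intro!: nn_integral_delta_integrand_ge_annulus assms)
  finally show "ennreal m * (\<integral>\<^sup>+x\<in>\<Omega>. ennreal (\<bar>v x\<bar> powr p) \<partial>lebesgue) \<le> seminorm_delta_p \<delta> s p \<Omega> v"
    by (simp add: seminorm_delta_p_eq_integrand)
qed

lemma abs_powr_le_difference_quotient:
  fixes a b d \<delta> :: real
  assumes p: "p > 0" and \<alpha>: "\<alpha> \<ge> 0" and d: "0 < d" "d \<le> \<delta>"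
  shows "\<bar>a\<bar> powr p \<le> 2 powr p * \<delta> powr \<alpha> * (\<bar>a - b\<bar> powr p / d powr \<alpha>) + 2 powr p * \<bar>b\<bar> powr p"
proof -
  have "\<bar>a - b\<bar> powr p = d powr \<alpha> * (\<bar>a - b\<bar> powr p / d powr \<alpha>)"
    using d by simp
  also have "\<dots> \<le> \<delta> powr \<alpha> * (\<bar>a - b\<bar> powr p / d powr \<alpha>)"
    using d \<alpha> by (intro mult_right_mono powr_mono2) auto
  finally have "\<bar>a - b\<bar> powr p \<le> \<delta> powr \<alpha> * (\<bar>a - b\<bar> powr p / d powr \<alpha>)" .
  moreover have "\<bar>a\<bar> powr p \<le> 2 powr p * (\<bar>a - b\<bar> powr p + \<bar>b\<bar> powr p)"
    using powr_abs_add_le[OF p, of "a - b" b] by simp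
  ultimately show ?thesis
    by (smt (verit) distrib_left mult.assoc mult_left_mono powr_ge_zero)
qed

lemma shifted_ball_bounds:
  fixes x z e :: "'a::euclidean_space"
  assumes e: "norm e = 1" and \<delta>: "\<delta> > 0" and z: "z \<in> ball (x + (\<delta> / 2) *\<^sub>R e) (\<delta> / 4)"
  shows "0 < dist x z" "dist x z < \<delta>" "x \<bullet> e + \<delta> / 4 < z \<bullet> e"
proof -
  define c where "c = x + (\<delta> / 2) *\<^sub>R e"
  have xc: "dist x c = \<delta> / 2" using e \<delta> by (simp add: c_def dist_norm)
  have cz: "dist c z < \<delta> / 4" using z by (simp add: c_def)
  show "0 < dist x z"
    using dist_triangle[of x c z] xc cz dist_commute[of z c] \<delta> by linarith
  show "dist x z < \<delta>"
    using dist_triangle[of x z c] xc cz \<delta> by linarith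
  have "\<bar>(z - c) \<bullet> e\<bar> \<le> norm (z - c) * norm e"
    by (rule Cauchy_Schwarz_ineq2)
  then have "\<bar>(z - c) \<bullet> e\<bar> < \<delta> / 4"
    using e cz by (simp add: dist_norm norm_minus_commute)
  moreover have "z \<bullet> e = x \<bullet> e + \<delta> / 2 + (z - c) \<bullet> e"
    using e by (simp add: c_def inner_diff_left inner_add_left dot_square_norm)
  ultimately show "x \<bullet> e + \<delta> / 4 < z \<bullet> e" by linarith
qed

lemma nn_integral_nn_integral_indicator_ball:
  fixes f :: "'a::euclidean_space \<Rightarrow> ennreal"
  assumes [measurable]: "f \<in> borel_measurable lebesgue" and r: "r \<ge> 0"
  shows "(\<integral>\<^sup>+x. (\<integral>\<^sup>+z. indicator (ball (x + c) r) z * f z \<partial>lebesgue) \<partial>lebesgue)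
    = ennreal (unit_ball_vol DIM('a) * r^DIM('a)) * (\<integral>\<^sup>+z. f z \<partial>lebesgue)"
proof -
  have [measurable]: "(\<lambda>(z, x). f z * indicator (ball (z - c) r) x) \<in> borel_measurable (lebesgue \<Otimes>\<^sub>M lebesgue)"
    unfolding indicator_def mem_ball by measurable
  have "indicator (ball (x + c) r) z = (indicator (ball (z - c) r) x :: ennreal)" for x z
    by (simp add: indicator_def dist_norm norm_minus_commute algebra_simps)
  then have "(\<integral>\<^sup>+x. (\<integral>\<^sup>+z. indicator (ball (x + c) r) z * f z \<partial>lebesgue) \<partial>lebesgue)
      = (\<integral>\<^sup>+z. (\<integral>\<^sup>+x. f z * indicator (ball (z - c) r) x \<partial>lebesgue) \<partial>lebesgue)"
    by (subst lebesgue_pair.Fubini') (simp_all add: mult.commute)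
  also have "\<dots> = (\<integral>\<^sup>+z. ennreal (unit_ball_vol DIM('a) * r^DIM('a)) * f z \<partial>lebesgue)"
    using r by (simp add: nn_integral_cmult_indicator emeasure_ball mult.commute)
  finally show ?thesis
    by (simp add: nn_integral_cmult)
qed

lemma nn_integral_delta_integrand_ge_shifted_ball:
  fixes v :: "'a::euclidean_space \<Rightarrow> real"
  assumes [measurable]: "v \<in> borel_measurable lebesgue"
    and x: "x \<in> \<Omega>" and e: "norm e = 1" and \<delta>: "\<delta> > 0" and p: "p > 0" and sp: "s * p > 0"
  defines "B \<equiv> ball (x + (\<delta> / 2) *\<^sub>R e) (\<delta> / 4)"
  shows "ennreal (unit_ball_vol DIM('a) * (\<delta> / 4)^DIM('a) * \<bar>v x\<bar> powr p)
    \<le> ennreal (2 powr p * \<delta> powr (real DIM('a) + s * p)) * (\<integral>\<^sup>+y. delta_integrand \<delta> s p \<Omega> v x y \<partial>lebesgue)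
      + ennreal (2 powr p) * (\<integral>\<^sup>+z\<in>B. ennreal (\<bar>v z\<bar> powr p) \<partial>lebesgue)"
proof -
  define \<alpha> where "\<alpha> = real DIM('a) + s * p"
  have [measurable]: "B \<in> sets lebesgue"
    by (simp add: B_def)
  have "ennreal (unit_ball_vol DIM('a) * (\<delta> / 4)^DIM('a) * \<bar>v x\<bar> powr p)
      = (\<integral>\<^sup>+z. ennreal (\<bar>v x\<bar> powr p) * indicator B z \<partial>lebesgue)"
    using \<delta> by (simp add: nn_integral_cmult_indicator B_def emeasure_ball ennreal_mult mult.commute)
  also have "\<dots> \<le> (\<integral>\<^sup>+z. ennreal (2 powr p * \<delta> powr \<alpha>) * delta_integrand \<delta> s p \<Omega> v x z
      + ennreal (2 powr p) * (ennreal (\<bar>v z\<bar> powr p) * indicator B z) \<partial>lebesgue)"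
  proof (intro nn_integral_mono)
    fix z
    show "ennreal (\<bar>v x\<bar> powr p) * indicator B z
      \<le> ennreal (2 powr p * \<delta> powr \<alpha>) * delta_integrand \<delta> s p \<Omega> v x z
        + ennreal (2 powr p) * (ennreal (\<bar>v z\<bar> powr p) * indicator B z)"
    proof (cases "z \<in> B")
      case True
      note z = shifted_ball_bounds[OF e \<delta> True[unfolded B_def]]
      have "x \<in> nl_ext \<delta> \<Omega>" "z \<in> nl_ext \<delta> \<Omega>"
        using x z nl_ext_memI[of x \<Omega> z \<delta>] by (auto simp: nl_ext_def)
      then have "delta_integrand \<delta> s p \<Omega> v x z = ennreal (\<bar>v x - v z\<bar> powr p / dist x z powr \<alpha>)"
        using z by (simp add: delta_integrand_def \<alpha>_def)
      moreover have "\<bar>v x\<bar> powr p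
          \<le> 2 powr p * \<delta> powr \<alpha> * (\<bar>v x - v z\<bar> powr p / dist x z powr \<alpha>) + 2 powr p * \<bar>v z\<bar> powr p"
        using z sp by (intro abs_powr_le_difference_quotient p) (auto simp: \<alpha>_def)
      ultimately show ?thesis
        using True by (simp add: ennreal_mult[symmetric] ennreal_plus[symmetric] ennreal_leI del: ennreal_plus)
    qed simp
  qed
  also have "\<dots> = ennreal (2 powr p * \<delta> powr \<alpha>) * (\<integral>\<^sup>+y. delta_integrand \<delta> s p \<Omega> v x y \<partial>lebesgue)
      + ennreal (2 powr p) * (\<integral>\<^sup>+z\<in>B. ennreal (\<bar>v z\<bar> powr p) \<partial>lebesgue)"
    using \<delta> by (simp add: nn_integral_add nn_integral_cmult)
  finally show ?thesis
    by (simp add: \<alpha>_def)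
qed

lemma nn_integral_powr_le_shifted:
  fixes v :: "'a::euclidean_space \<Rightarrow> real"
  assumes [measurable]: "v \<in> borel_measurable lebesgue" "S \<in> sets lebesgue" "T \<in> sets lebesgue"
    and v0: "AE x in lebesgue. x \<notin> \<Omega> \<longrightarrow> v x = 0"
    and p: "p > 0" and sp: "s * p > 0" and \<delta>: "\<delta> > 0" and e: "norm e = 1"
    and shift: "\<And>x. x \<in> S \<Longrightarrow> x \<in> \<Omega> \<Longrightarrow> ball (x + (\<delta> / 2) *\<^sub>R e) (\<delta> / 4) \<subseteq> T"
  shows "(\<integral>\<^sup>+x\<in>S. ennreal (\<bar>v x\<bar> powr p) \<partial>lebesgue)
     \<le> ennreal (2 powr p * \<delta> powr (real DIM('a) + s * p) / (unit_ball_vol DIM('a) * (\<delta> / 4)^DIM('a)))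
           * seminorm_delta_p \<delta> s p \<Omega> v
       + ennreal (2 powr p) * (\<integral>\<^sup>+z\<in>T. ennreal (\<bar>v z\<bar> powr p) \<partial>lebesgue)"
proof -
  define V where "V = unit_ball_vol DIM('a) * (\<delta> / 4)^DIM('a)"
  define A where "A = 2 powr p * \<delta> powr (real DIM('a) + s * p)"
  define M where "M = (2::real) powr p"
  define I where "I = (\<integral>\<^sup>+z\<in>T. ennreal (\<bar>v z\<bar> powr p) \<partial>lebesgue)"
  let ?B = "\<lambda>x. ball (x + (\<delta> / 2) *\<^sub>R e) (\<delta> / 4)"
  have V: "V > 0" using \<delta> by (simp add: V_def)
  have [measurable]: "(\<lambda>(x, z). indicator (?B x) z * (ennreal (\<bar>v z\<bar> powr p) * indicator T z))
      \<in> borel_measurable (lebesgue \<Otimes>\<^sub>M lebesgue)"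
    unfolding indicator_def[of "?B _"] mem_ball by measurable
  have pointwise: "ennreal (V * \<bar>v x\<bar> powr p) * indicator S x
      \<le> ennreal A * (\<integral>\<^sup>+y. delta_integrand \<delta> s p \<Omega> v x y \<partial>lebesgue)
        + ennreal M * (\<integral>\<^sup>+z. indicator (?B x) z * (ennreal (\<bar>v z\<bar> powr p) * indicator T z) \<partial>lebesgue)"
    if "x \<notin> \<Omega> \<longrightarrow> v x = 0" for x
  proof (cases "x \<in> S \<and> x \<in> \<Omega>")
    case True
    then have "(\<integral>\<^sup>+z\<in>?B x. ennreal (\<bar>v z\<bar> powr p) \<partial>lebesgue)
        = (\<integral>\<^sup>+z. indicator (?B x) z * (ennreal (\<bar>v z\<bar> powr p) * indicator T z) \<partial>lebesgue)"
      using shift[of x] by (intro nn_integral_cong) (auto simp: indicator_def)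
    then show ?thesis
      using True nn_integral_delta_integrand_ge_shifted_ball[OF assms(1) _ e \<delta> p sp, of x \<Omega>]
      by (simp add: A_def M_def V_def mult.commute)
  qed (use that p in \<open>auto simp: indicator_def\<close>)
  have "ennreal V * (\<integral>\<^sup>+x\<in>S. ennreal (\<bar>v x\<bar> powr p) \<partial>lebesgue)
      = (\<integral>\<^sup>+x. ennreal (V * \<bar>v x\<bar> powr p) * indicator S x \<partial>lebesgue)"
    using V by (simp add: nn_integral_cmult[symmetric] ennreal_mult mult_ac)
  also have "\<dots> \<le> (\<integral>\<^sup>+x. ennreal A * (\<integral>\<^sup>+y. delta_integrand \<delta> s p \<Omega> v x y \<partial>lebesgue)
      + ennreal M * (\<integral>\<^sup>+z. indicator (?B x) z * (ennreal (\<bar>v z\<bar> powr p) * indicator T z) \<partial>lebesgue) \<partial>lebesgue)"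
    using v0 by (intro nn_integral_mono_AE) (auto elim!: eventually_mono intro!: pointwise)
  also have "\<dots> = ennreal A * seminorm_delta_p \<delta> s p \<Omega> v + ennreal M * (ennreal V * I)"
    using \<delta> by (simp add: nn_integral_add nn_integral_cmult seminorm_delta_p_eq_integrand
        nn_integral_nn_integral_indicator_ball V_def I_def)
  finally show ?thesis
    unfolding A_def V_def M_def I_def by (rule ennreal_le_div_add_of_mult_le[OF _ V[unfolded V_def]]) simp
qed

lemma ennreal_linear_recurrence_le:
  fixes J :: "nat \<Rightarrow> ennreal"
  assumes J0: "J 0 = 0" and step: "\<And>k. J (Suc k) \<le> a + ennreal M * J k" and M: "M \<ge> 1"
  shows "J k \<le> ennreal (real k * M^k) * a"
proof (induction k)
  case 0
  then show ?case by (simp add: J0)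
next
  case (Suc k)
  have "J (Suc k) \<le> a + ennreal M * (ennreal (real k * M^k) * a)"
    using step[of k] Suc.IH by (meson add_left_mono mult_left_mono order_trans zero_le)
  also have "\<dots> = ennreal (1 + real k * M^Suc k) * a"
    using M by (simp add: ennreal_plus ennreal_mult distrib_left distrib_right mult_ac)
  also have "\<dots> \<le> ennreal (real (Suc k) * M^Suc k) * a"
    using one_le_power[OF M, of "Suc k"] by (intro mult_right_mono ennreal_leI) (auto simp: algebra_simps)
  finally show ?case .
qed

text \<open>\<open>nat \<lceil>8 * B / \<delta>\<rceil>\<close> steps of width \<open>\<delta> / 4\<close> cross the slab \<open>\<bar>x \<bullet> e\<bar> < B\<close> containing \<open>\<Omega>\<close>.\<close>

definition chain_const :: "nat \<Rightarrow> real \<Rightarrow> real \<Rightarrow> real \<Rightarrow> real \<Rightarrow> real" where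
  "chain_const n a p B \<delta> = real (nat \<lceil>8 * B / \<delta>\<rceil>) * (2 powr p)^(nat \<lceil>8 * B / \<delta>\<rceil>) *
      (2 powr p * \<delta> powr a / (unit_ball_vol n * (\<delta> / 4)^n))"

lemma chain_const_nonneg: "\<delta> > 0 \<Longrightarrow> chain_const n a p B \<delta> \<ge> 0"
  unfolding chain_const_def by (intro mult_nonneg_nonneg divide_nonneg_nonneg) auto

lemma nonlocal_poincare_small:
  fixes v :: "'a::euclidean_space \<Rightarrow> real"
  assumes [measurable]: "v \<in> borel_measurable lebesgue" "\<Omega> \<in> sets lebesgue"
    and v0: "AE x in lebesgue. x \<notin> \<Omega> \<longrightarrow> v x = 0"
    and p: "p > 0" and sp: "s * p > 0" and \<delta>: "\<delta> > 0" and B: "\<forall>x\<in>\<Omega>. norm x < B"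
  shows "(\<integral>\<^sup>+x\<in>\<Omega>. ennreal (\<bar>v x\<bar> powr p) \<partial>lebesgue)
     \<le> ennreal (chain_const DIM('a) (real DIM('a) + s * p) p B \<delta>) * seminorm_delta_p \<delta> s p \<Omega> v"
proof -
  obtain e :: 'a where e: "norm e = 1"
    using vector_choose_size[of 1] by auto
  have inner_bound: "\<bar>x \<bullet> e\<bar> < B" if "x \<in> \<Omega>" for x
    using Cauchy_Schwarz_ineq2[of x e] B that e by fastforce
  define H where "H k = {y. B - real k * \<delta> / 4 < y \<bullet> e}" for k :: nat
  have [measurable]: "H k \<in> sets lebesgue" for k
    unfolding H_def by (intro sets_completionI_sets) measurable
  define J where "J k = (\<integral>\<^sup>+x\<in>H k. ennreal (\<bar>v x\<bar> powr p) \<partial>lebesgue)" for k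
  define a where "a = ennreal (2 powr p * \<delta> powr (real DIM('a) + s * p) / (unit_ball_vol DIM('a) * (\<delta> / 4)^DIM('a)))
      * seminorm_delta_p \<delta> s p \<Omega> v"
  have step: "J (Suc k) \<le> a + ennreal (2 powr p) * J k" for k
    unfolding J_def a_def
  proof (rule nn_integral_powr_le_shifted[OF _ _ _ v0 p sp \<delta> e])
    show "ball (x + (\<delta> / 2) *\<^sub>R e) (\<delta> / 4) \<subseteq> H k" if "x \<in> H (Suc k)" for x
      using that shifted_ball_bounds(3)[OF e \<delta>] by (force simp: H_def field_simps)
  qed simp_all
  have "AE x in lebesgue. ennreal (\<bar>v x\<bar> powr p) * indicator (H 0) x = 0"
    using v0 by eventually_elim (use p in \<open>auto simp: H_def indicator_def dest!: inner_bound\<close>)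
  then have "J 0 = 0"
    unfolding J_def by (subst nn_integral_0_iff_AE) (simp_all add: mult.commute)
  from ennreal_linear_recurrence_le[OF this step] have J: "J k \<le> ennreal (real k * (2 powr p)^k) * a" for k
    using p by (simp add: ge_one_powr_ge_zero)
  define K where "K = nat \<lceil>8 * B / \<delta>\<rceil>"
  have "\<Omega> \<subseteq> H K"
  proof
    fix x assume "x \<in> \<Omega>"
    moreover have "8 * B / \<delta> \<le> real K"
      unfolding K_def by linarith
    then have "2 * B \<le> real K * \<delta> / 4"
      using \<delta> by (simp add: field_simps)
    ultimately show "x \<in> H K"
      using inner_bound[of x] by (auto simp: H_def)
  qed
  then have "(\<integral>\<^sup>+x\<in>\<Omega>. ennreal (\<bar>v x\<bar> powr p) \<partial>lebesgue) \<le> J K"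
    unfolding J_def by (intro nn_integral_mono) (auto simp: indicator_def)
  also have "\<dots> \<le> ennreal (real K * (2 powr p)^K) * a"
    by (rule J)
  also have "\<dots> = ennreal (chain_const DIM('a) (real DIM('a) + s * p) p B \<delta>) * seminorm_delta_p \<delta> s p \<Omega> v"
    unfolding a_def chain_const_def K_def[symmetric] mult.assoc[symmetric]
    using \<delta> by (subst ennreal_mult) auto
  finally show ?thesis .
qed

definition poincare_const :: "nat \<Rightarrow> real \<Rightarrow> real \<Rightarrow> real \<Rightarrow> real \<Rightarrow> real" where
  "poincare_const n a p B \<delta> = (if 4 * B \<le> \<delta> then 1 / annulus_const n a (2 * B) else chain_const n a p B \<delta>)"

lemma poincare_const_nonneg:
  assumes "\<delta> > 0" "B > 0" "n > 0"
  shows "poincare_const n a p B \<delta> \<ge> 0"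
  using annulus_const_pos[of "2 * B" n a] chain_const_nonneg[of \<delta> n a p B] assms
  by (simp add: poincare_const_def)

lemma nonlocal_poincare:
  fixes v :: "'a::euclidean_space \<Rightarrow> real"
  assumes [measurable]: "v \<in> borel_measurable lebesgue" "\<Omega> \<in> sets lebesgue"
    and v0: "AE x in lebesgue. x \<notin> \<Omega> \<longrightarrow> v x = 0"
    and p: "p > 0" and sp: "s * p > 0" and \<delta>: "\<delta> > 0" and B: "B > 0" "\<forall>x\<in>\<Omega>. norm x < B"
  shows "(\<integral>\<^sup>+x\<in>\<Omega>. ennreal (\<bar>v x\<bar> powr p) \<partial>lebesgue)
     \<le> ennreal (poincare_const DIM('a) (real DIM('a) + s * p) p B \<delta>) * seminorm_delta_p \<delta> s p \<Omega> v"
proof (cases "4 * B \<le> \<delta>")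
  case True
  have "\<forall>x\<in>\<Omega>. \<forall>y\<in>\<Omega>. dist x y < 2 * B"
    using B(2) by (smt (verit) dist_norm norm_triangle_ineq4)
  with True show ?thesis
    using nonlocal_poincare_large[OF assms(1-3) sp, of "2 * B" \<delta>] B by (simp add: poincare_const_def)
next
  case False
  then show ?thesis
    using nonlocal_poincare_small[OF assms(1-3) p sp \<delta> B(2)] by (simp add: poincare_const_def)
qed

section \<open>Equivalence of the seminorms\<close>

lemma seminorm_full_p_le_delta_p:
  fixes v :: "'a::euclidean_space \<Rightarrow> real"
  assumes [measurable]: "v \<in> borel_measurable lebesgue" "\<Omega> \<in> sets lebesgue"
    and v0: "AE x in lebesgue. x \<notin> \<Omega> \<longrightarrow> v x = 0"
    and p: "p > 0" and sp: "s * p > 0" and \<delta>: "\<delta> > 0" and B: "B > 0" "\<forall>x\<in>\<Omega>. norm x < B"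
  shows "seminorm_full_p s p v \<le> ennreal (1 + 2 * 2 powr p * tail_const DIM('a) (s * p) \<delta>
            * poincare_const DIM('a) (real DIM('a) + s * p) p B \<delta>) * seminorm_delta_p \<delta> s p \<Omega> v"
proof -
  define A where "A = 2 * 2 powr p * tail_const DIM('a) (s * p) \<delta>"
  define P where "P = poincare_const DIM('a) (real DIM('a) + s * p) p B \<delta>"
  have "A \<ge> 0" "P \<ge> 0"
    using tail_const_nonneg[OF sp] poincare_const_nonneg[OF \<delta> B(1)] by (simp_all add: A_def P_def)
  have "seminorm_full_p s p v \<le> seminorm_delta_p \<delta> s p \<Omega> v + ennreal A * (\<integral>\<^sup>+x\<in>\<Omega>. ennreal (\<bar>v x\<bar> powr p) \<partial>lebesgue)"
    unfolding A_def by (rule seminorm_full_p_le[OF assms(1) v0 \<delta> p sp])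
  also have "\<dots> \<le> seminorm_delta_p \<delta> s p \<Omega> v + ennreal A * (ennreal P * seminorm_delta_p \<delta> s p \<Omega> v)"
    unfolding P_def by (intro add_left_mono mult_left_mono nonlocal_poincare assms p sp \<delta> B) simp
  also have "\<dots> = ennreal (1 + A * P) * seminorm_delta_p \<delta> s p \<Omega> v"
    using \<open>A \<ge> 0\<close> \<open>P \<ge> 0\<close> by (simp add: ennreal_plus ennreal_mult distrib_right mult.assoc)
  finally show ?thesis
    by (simp add: A_def P_def mult.assoc)
qed

text \<open>The summand \<open>1 / \<delta>\<close> makes \<open>C(\<delta>) > 1\<close> strict without affecting the limit.\<close>

definition embedding_const :: "nat \<Rightarrow> real \<Rightarrow> real \<Rightarrow> real \<Rightarrow> real \<Rightarrow> real" where
  "embedding_const n s p B \<delta> =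
     (1 + 2 * 2 powr p * tail_const n (s * p) \<delta> * poincare_const n (real n + s * p) p B \<delta> + 1 / \<delta>) powr (1 / p)"

lemma embedding_const_base_gt_1:
  assumes "\<delta> > 0" "B > 0" "n > 0" "s * p > 0"
  shows "1 + 2 * 2 powr p * tail_const n (s * p) \<delta> * poincare_const n (real n + s * p) p B \<delta> + 1 / \<delta> > 1"
proof -
  have "0 \<le> 2 * 2 powr p * tail_const n (s * p) \<delta> * poincare_const n (real n + s * p) p B \<delta>"
    using assms tail_const_nonneg[of "s * p" n \<delta>] poincare_const_nonneg[of \<delta> B n "real n + s * p" p]
    by simp
  then show ?thesis
    using assms by (simp add: add_nonneg_pos)
qed

lemma embedding_const_gt_1:
  assumes "\<delta> > 0" "B > 0" "n > 0" "p > 0" "s * p > 0"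
  shows "embedding_const n s p B \<delta> > 1"
  unfolding embedding_const_def using assms embedding_const_base_gt_1[of \<delta> B n s p]
  by (intro gr_one_powr) auto

lemma embedding_const_tendsto_1:
  assumes "p > 0" "s * p > 0"
  shows "(embedding_const n s p B \<longlongrightarrow> 1) at_top"
proof -
  have "eventually (\<lambda>\<delta>. poincare_const n (real n + s * p) p B \<delta> = 1 / annulus_const n (real n + s * p) (2 * B)) at_top"
    using eventually_ge_at_top[of "4 * B"] by eventually_elim (simp add: poincare_const_def)
  then have "((\<lambda>\<delta>. poincare_const n (real n + s * p) p B \<delta>) \<longlongrightarrow> 1 / annulus_const n (real n + s * p) (2 * B)) at_top"
    by (rule tendsto_eventually)
  then have "((\<lambda>\<delta>. 1 + 2 * 2 powr p * tail_const n (s * p) \<delta> * poincare_const n (real n + s * p) p B \<delta> + 1 / \<delta>) \<longlongrightarrow>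
      1 + 2 * 2 powr p * 0 * (1 / annulus_const n (real n + s * p) (2 * B)) + 0) at_top"
    by (intro tendsto_intros tail_const_tendsto_0 assms tendsto_divide_0[OF tendsto_const]
        filterlim_at_top_imp_at_infinity filterlim_ident)
  then show ?thesis
    unfolding embedding_const_def[abs_def] using assms
    by (auto intro: tendsto_eq_intros)
qed

lemma seminorm_full_p_le_embedding_const:
  fixes v :: "'a::euclidean_space \<Rightarrow> real"
  assumes [measurable]: "v \<in> borel_measurable lebesgue" "\<Omega> \<in> sets lebesgue"
    and v0: "AE x in lebesgue. x \<notin> \<Omega> \<longrightarrow> v x = 0"
    and p: "p > 0" and sp: "s * p > 0" and \<delta>: "\<delta> > 0" and B: "B > 0" "\<forall>x\<in>\<Omega>. norm x < B"
  shows "seminorm_full_p s p v \<le> ennreal (embedding_const DIM('a) s p B \<delta> powr p) * seminorm_delta_p \<delta> s p \<Omega> v"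
proof -
  have "embedding_const DIM('a) s p B \<delta> powr p
      = 1 + 2 * 2 powr p * tail_const DIM('a) (s * p) \<delta> * poincare_const DIM('a) (real DIM('a) + s * p) p B \<delta> + 1 / \<delta>"
    unfolding embedding_const_def using embedding_const_base_gt_1[of \<delta> B "DIM('a)" s p] \<delta> B sp p
    by (simp add: powr_powr)
  then show ?thesis
    using seminorm_full_p_le_delta_p[OF assms] \<delta>
    by (elim order_trans) (auto intro!: mult_right_mono ennreal_leI)
qed

lemma restrict_mem_X0_delta:
  assumes "v \<in> X0_infty s p \<Omega>" and \<delta>: "\<delta> > 0" and p: "p > 0"
  shows "restrict v (nl_ext \<delta> \<Omega>) \<in> X0_delta \<delta> s p \<Omega>"
proof -
  have [measurable]: "v \<in> borel_measurable lebesgue"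
    and L: "(\<integral>\<^sup>+x\<in>\<Omega>. ennreal (\<bar>v x\<bar> powr p) \<partial>lebesgue) < \<infinity>"
    and full: "seminorm_full_p s p v < \<infinity>" and v0: "AE x in lebesgue. x \<notin> \<Omega> \<longrightarrow> v x = 0"
    using assms(1) by (auto simp: X0_infty_def)
  let ?w = "restrict v (nl_ext \<delta> \<Omega>)"
  have "?w \<in> borel_measurable lebesgue"
    unfolding restrict_def using \<delta> by measurable
  moreover have "(\<integral>\<^sup>+x\<in>nl_ext \<delta> \<Omega>. ennreal (\<bar>?w x\<bar> powr p) \<partial>lebesgue) = (\<integral>\<^sup>+x\<in>\<Omega>. ennreal (\<bar>v x\<bar> powr p) \<partial>lebesgue)"
    using v0 subset_nl_ext[of \<Omega> \<delta>] p
    by (intro nn_integral_cong_AE) (auto simp: indicator_def elim!: eventually_mono)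
  moreover have "seminorm_delta_p \<delta> s p \<Omega> ?w \<le> seminorm_full_p s p v"
    using seminorm_delta_p_le_full_p[of \<delta> s p \<Omega> v] by (simp add: seminorm_delta_p_cong[of \<delta> \<Omega> ?w v])
  moreover have "AE x in lebesgue. x \<in> nl_collar \<delta> \<Omega> \<longrightarrow> ?w x = 0"
    using v0 by eventually_elim (auto simp: nl_collar_def nl_ext_def)
  ultimately show ?thesis
    using L full unfolding X0_delta_def by (auto simp: le_less_trans)
qed

lemma zero_ext_mem_X0_infty:
  fixes \<Omega> :: "'a::euclidean_space set"
  assumes "u \<in> X0_delta \<delta> s p \<Omega>" and \<Omega>: "\<Omega> \<in> sets lebesgue"
    and p: "p > 0" and sp: "s * p > 0" and \<delta>: "\<delta> > 0" and B: "B > 0" "\<forall>x\<in>\<Omega>. norm x < B"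
  shows "zero_ext \<delta> \<Omega> u \<in> X0_infty s p \<Omega>"
proof -
  have [measurable]: "u \<in> borel_measurable lebesgue"
    and L: "(\<integral>\<^sup>+x\<in>nl_ext \<delta> \<Omega>. ennreal (\<bar>u x\<bar> powr p) \<partial>lebesgue) < \<infinity>"
    and semi: "seminorm_delta_p \<delta> s p \<Omega> u < \<infinity>" and u0: "AE x in lebesgue. x \<in> nl_collar \<delta> \<Omega> \<longrightarrow> u x = 0"
    using assms(1) by (auto simp: X0_delta_def)
  let ?w = "zero_ext \<delta> \<Omega> u"
  have w [measurable]: "?w \<in> borel_measurable lebesgue"
    unfolding zero_ext_def using \<delta> by measurable
  have "(\<integral>\<^sup>+x\<in>\<Omega>. ennreal (\<bar>?w x\<bar> powr p) \<partial>lebesgue) \<le> (\<integral>\<^sup>+x\<in>nl_ext \<delta> \<Omega>. ennreal (\<bar>u x\<bar> powr p) \<partial>lebesgue)"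
    using subset_nl_ext[of \<Omega> \<delta>] by (intro nn_integral_mono) (auto simp: indicator_def zero_ext_def)
  moreover have w0: "AE x in lebesgue. x \<notin> \<Omega> \<longrightarrow> ?w x = 0"
    using u0 by eventually_elim (auto simp: zero_ext_def nl_collar_def nl_ext_def)
  moreover have "seminorm_full_p s p ?w \<le> ennreal (embedding_const DIM('a) s p B \<delta> powr p) * seminorm_delta_p \<delta> s p \<Omega> u"
    using seminorm_full_p_le_embedding_const[OF w \<Omega> w0 p sp \<delta> B] seminorm_delta_p_cong[of \<delta> \<Omega> ?w u]
    by (simp add: zero_ext_def)
  ultimately show ?thesis
    using L semi w unfolding X0_infty_def by (auto simp: le_less_trans ennreal_mult_less_top)
qed

theorem lemma2p3:
  fixes \<Omega> :: "'a::euclidean_space set" and s p :: real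
  assumes "lipschitz_domain \<Omega>" and "0 < s" "s < 1" and "1 < p"
  shows "\<exists>C :: real \<Rightarrow> real.
     (\<forall>\<delta>>0. C \<delta> > 1 \<and>
        (\<forall>v\<in>X0_infty s p \<Omega>. restrict v (nl_ext \<delta> \<Omega>) \<in> X0_delta \<delta> s p \<Omega>) \<and>
        (\<forall>u\<in>X0_delta \<delta> s p \<Omega>. zero_ext \<delta> \<Omega> u \<in> X0_infty s p \<Omega>) \<and>
        (\<forall>v::'a \<Rightarrow> real. v \<in> borel_measurable lebesgue \<longrightarrow>
            (AE x in lebesgue. x \<notin> \<Omega> \<longrightarrow> v x = 0) \<longrightarrow>
            seminorm_delta_p \<delta> s p \<Omega> v \<le> seminorm_full_p s p v \<and>
            seminorm_full_p s p v \<le> ennreal (C \<delta> powr p) * seminorm_delta_p \<delta> s p \<Omega> v)) \<and>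
     (C \<longlongrightarrow> 1) at_top"
proof -
  have "bounded \<Omega>" "open \<Omega>"
    using assms(1) by (auto simp: lipschitz_domain_def)
  then obtain B where B: "B > 0" "\<forall>x\<in>\<Omega>. norm x < B"
    by (meson bounded_pos_less)
  have \<Omega>: "\<Omega> \<in> sets lebesgue"
    using \<open>open \<Omega>\<close> by simp
  have p: "p > 0" and sp: "s * p > 0"
    using assms by simp_all
  show ?thesis
    using embedding_const_gt_1[OF _ B(1) DIM_positive p sp] restrict_mem_X0_delta[OF _ _ p]
      zero_ext_mem_X0_infty[OF _ \<Omega> p sp _ B] seminorm_delta_p_le_full_p
      seminorm_full_p_le_embedding_const[OF _ \<Omega> _ p sp _ B] embedding_const_tendsto_1[OF p sp]
    by (intro exI[of _ "embedding_const DIM('a) s p B"]) blast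
qed

end
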